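(* For all integers $n\ge0$ and odd $k\ge3$, $$\delta_kH^{\mathfrak a}(1^n)=-\sum_{i=\max(1,k-n)}^{k-1}\frac1k\binom ki\,T^i\,H^{\mathfrak a}(1^{n-k+i}).$$
   Context: $\mathcal M^{(1)}=\mathbb Q[\zeta^{\mathfrak a}(3),\zeta^{\mathfrak a}(5),\dots]$ is the free polynomial subalgebra of depth-one motivic MZVs in $\mathcal A=\mathcal H/\zeta^{\mathfrak m}(2)\mathcal H$; $\zeta^{\mathfrak a}(k)=0$ for even $k$. For odd $k\ge3$, $\delta_k$ is the continuous $\mathbb Q((T))$-linear derivation $\partial/\partial\zeta^{\mathfrak a}(k)$ of $\mathcal M^{(1)}((T))$. Motivic power sums: $H^{\mathfrak a}(n)=(-1)^n\sum_{j\ge1}\binom{n+j-1}{n-1}\zeta^{\mathfrak a}(n+j)T^j$. Motivic elementary symmetric sums: $H^{\mathfrak a}(1^0)=1$, $H^{\mathfrak a}(1^n)=\frac1n\sum_{i=1}^n(-1)^{i-1}H^{\mathfrak a}(i)H^{\mathfrak a}(1^{n-i})$ for $n\ge1$. *)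

theory Defs
  imports "HOL-Library.Poly_Mapping" "HOL-Computational_Algebra.Formal_Power_Series"
begin

text \<open>The depth-one algebra M1 = Q[zeta(3), zeta(5), ...] is
  realised as the subalgebra generated by the variables X_k with k odd, k >= 3,
  via zeta(k) = X_k.\<close>
type_synonym qpoly = "(nat \<Rightarrow>\<^sub>0 nat) \<Rightarrow>\<^sub>0 rat"

definition qconst :: "rat \<Rightarrow> qpoly" where
  "qconst r = Poly_Mapping.single 0 r"

definition qvar :: "nat \<Rightarrow> qpoly" where
  "qvar v = Poly_Mapping.single (Poly_Mapping.single v 1) 1"

text \<open>Motivic depth-one zeta values: zeta^a(k) = 0 for even k (and k < 3 does not occur).\<close>
definition zeta_a :: "nat \<Rightarrow> qpoly" where
  "zeta_a k = (if odd k \<and> k \<ge> 3 then qvar k else 0)"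

definition pdiff :: "nat \<Rightarrow> qpoly \<Rightarrow> qpoly" where
  "pdiff v p = (\<Sum>(m::nat \<Rightarrow>\<^sub>0 nat)\<in>Poly_Mapping.keys p. Poly_Mapping.single (m - Poly_Mapping.single v 1)
                   (of_nat (Poly_Mapping.lookup m v) * (Poly_Mapping.lookup p m)))"

definition delta :: "nat \<Rightarrow> qpoly fps \<Rightarrow> qpoly fps" where
  "delta k f = Abs_fps (\<lambda>j. pdiff k (fps_nth f j))"

definition Hpow :: "nat \<Rightarrow> qpoly fps" where
  "Hpow n = Abs_fps (\<lambda>j. if j = 0 then 0
      else (-1) ^ n * of_nat ((n + j - 1) choose (n - 1)) * zeta_a (n + j))"

function Helem :: "nat \<Rightarrow> qpoly fps" where
  "Helem n = (if n = 0 then 1 else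
      fps_const (qconst (1 / of_nat n)) *
        (\<Sum>i = 1..n. (-1) ^ (i - 1) * Hpow i * Helem (n - i)))"
  by auto
termination by (relation "measure id") auto

end

theory Submission
  imports Defs
begin

(* The derivation delta_k kills T and the rational constants, and since the power sums have
   depth one, delta_k H(i) = (-1)^i C(k-1,i-1) T^(k-i) for i < k and 0 otherwise.
   Differentiating Newton's identity n H(1^n) = sum_i (-1)^(i-1) H(i) H(1^(n-i)) gives two sums.
   The one containing delta_k H(i) is -sum_j C(k-1,j) T^j H(1^(n+j-k)); in the other, the
   induction hypothesis followed by Newton's identity at n+j-k yields
   -sum_j (1/k) C(k,j) (n+j-k) T^j H(1^(n+j-k)).  Since (k-j) C(k,j) = k C(k-1,j), the
   coefficients add up to n (1/k) C(k,j), and dividing by n gives the formula. *)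

lemma poly_mapping_sum_single:
  "p = (\<Sum>m\<in>Poly_Mapping.keys p. Poly_Mapping.single m (Poly_Mapping.lookup p m))"
  by (rule poly_mapping_eqI) (auto simp: lookup_sum lookup_single when_def in_keys_iff)

lemma pdiff_eq_sum_superset:
  assumes "finite S" "Poly_Mapping.keys p \<subseteq> S"
  shows "pdiff v p = (\<Sum>m\<in>S. Poly_Mapping.single (m - Poly_Mapping.single v 1)
                       (of_nat (Poly_Mapping.lookup m v) * Poly_Mapping.lookup p m))"
  unfolding pdiff_def using assms
  by (intro sum.mono_neutral_left) (auto simp: in_keys_iff)

lemma pdiff_add: "pdiff v (p + q) = pdiff v p + pdiff v q"
  using keys_add[of p q]
  by (simp add: pdiff_eq_sum_superset[of "Poly_Mapping.keys p \<union> Poly_Mapping.keys q"]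
      lookup_add distrib_left single_add sum.distrib)

lemma pdiff_zero [simp]: "pdiff v 0 = 0"
  by (simp add: pdiff_def)

lemma pdiff_sum: "pdiff v (sum f A) = (\<Sum>a\<in>A. pdiff v (f a))"
  by (induction A rule: infinite_finite_induct) (auto simp: pdiff_add)

lemma pdiff_single:
  "pdiff v (Poly_Mapping.single m c) =
     Poly_Mapping.single (m - Poly_Mapping.single v 1) (of_nat (Poly_Mapping.lookup m v) * c)"
  by (cases "c = 0") (auto simp: pdiff_def)

lemma pdiff_single_mult:
  "pdiff v (Poly_Mapping.single a x * Poly_Mapping.single b y) =
     pdiff v (Poly_Mapping.single a x) * Poly_Mapping.single b y
     + Poly_Mapping.single a x * pdiff v (Poly_Mapping.single b y)"
proof -
  let ?e = "Poly_Mapping.single v (1::nat)"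
  have shift: "m - ?e + m' = m + m' - ?e" if "Poly_Mapping.lookup m v \<noteq> 0" for m m'
    using that by (intro poly_mapping_eqI) (auto simp: lookup_minus lookup_add lookup_single when_def)
  have "Poly_Mapping.single (a - ?e + b) (of_nat (Poly_Mapping.lookup a v) * x * y)
        = Poly_Mapping.single (a + b - ?e) (of_nat (Poly_Mapping.lookup a v) * x * y)"
    using shift[of a b] by (cases "Poly_Mapping.lookup a v = 0") simp_all
  moreover have "Poly_Mapping.single (a + (b - ?e)) (x * (of_nat (Poly_Mapping.lookup b v) * y))
        = Poly_Mapping.single (a + b - ?e) (of_nat (Poly_Mapping.lookup b v) * x * y)"
    using shift[of b a] by (cases "Poly_Mapping.lookup b v = 0") (simp_all add: ac_simps)
  ultimately show ?thesis
    by (simp add: pdiff_single mult_single lookup_add algebra_simps flip: single_add)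
qed

lemma pdiff_mult: "pdiff v (p * q) = pdiff v p * q + p * pdiff v q"
proof -
  let ?s = "\<lambda>r m. Poly_Mapping.single m (Poly_Mapping.lookup r m)"
  have "pdiff v (p * q) = pdiff v ((\<Sum>a\<in>Poly_Mapping.keys p. ?s p a) * (\<Sum>b\<in>Poly_Mapping.keys q. ?s q b))"
    by (simp flip: poly_mapping_sum_single)
  also have "\<dots> = (\<Sum>a\<in>Poly_Mapping.keys p. pdiff v (?s p a)) * (\<Sum>b\<in>Poly_Mapping.keys q. ?s q b)
                 + (\<Sum>a\<in>Poly_Mapping.keys p. ?s p a) * (\<Sum>b\<in>Poly_Mapping.keys q. pdiff v (?s q b))"
    by (simp add: sum_product pdiff_sum pdiff_single_mult sum.distrib)
  also have "\<dots> = pdiff v p * q + p * pdiff v q"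
    by (simp flip: pdiff_sum poly_mapping_sum_single)
  finally show ?thesis .
qed

lemma pdiff_of_int [simp]: "pdiff v (of_int z) = 0"
  by (simp add: pdiff_single flip: single_of_int)

lemma pdiff_of_nat [simp]: "pdiff v (of_nat n) = 0"
  using pdiff_of_int[of v "int n"] by simp

lemma pdiff_minus_one_power [simp]: "pdiff v ((-1) ^ n) = 0"
  using pdiff_of_int[of v "(-1) ^ n"] by simp

lemma pdiff_zeta_a:
  assumes "odd k" "3 \<le> k"
  shows "pdiff k (zeta_a w) = (if w = k then 1 else 0)"
  using assms by (auto simp: zeta_a_def qvar_def pdiff_single lookup_single)

lemma fps_nth_delta [simp]: "fps_nth (delta k f) j = pdiff k (fps_nth f j)"
  by (simp add: delta_def)

lemma delta_add: "delta k (f + g) = delta k f + delta k g"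
  by (simp add: fps_ext pdiff_add)

lemma delta_sum: "delta k (sum f A) = (\<Sum>a\<in>A. delta k (f a))"
  by (induction A rule: infinite_finite_induct) (auto simp: delta_add fps_ext)

lemma delta_mult: "delta k (f * g) = delta k f * g + f * delta k g"
  by (simp add: fps_ext fps_mult_nth pdiff_sum pdiff_mult sum.distrib)

lemma delta_of_int [simp]: "delta k (of_int z) = 0"
  by (simp add: fps_ext fps_of_int)

lemma delta_one [simp]: "delta k 1 = 0"
  using delta_of_int[of k 1] by simp

lemma delta_of_nat [simp]: "delta k (of_nat n) = 0"
  using delta_of_int[of k "int n"] by simp

lemma delta_minus_one_power [simp]: "delta k ((-1) ^ n) = 0"
  using delta_of_int[of k "(-1) ^ n"] by simp

lemma delta_Hpow:
  assumes "odd k" "3 \<le> k" "1 \<le> i"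
  shows "delta k (Hpow i) =
    (if i < k then (-1) ^ i * of_nat ((k - 1) choose (i - 1)) * fps_X ^ (k - i) else 0)"
proof -
  have "(-1) ^ i * of_nat ((k - 1) choose (i - 1)) =
      fps_const ((-1) ^ i * of_nat ((k - 1) choose (i - 1)) :: qpoly)"
    by (simp flip: fps_of_nat fps_const_mult fps_const_power fps_const_neg)
  then show ?thesis
    using assms by (auto simp: fps_eq_iff Hpow_def pdiff_mult pdiff_zeta_a fps_X_power_mult_right_nth)
qed

lemma of_nat_mult_fps_const_inverse:
  "n \<noteq> 0 \<Longrightarrow> of_nat n * fps_const (qconst (1 / of_nat n)) = (1 :: qpoly fps)"
  by (simp add: qconst_def mult_single flip: fps_of_nat single_of_nat)

declare Helem.simps [simp del]

lemma Helem_0 [simp]: "Helem 0 = 1"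
  by (simp add: Helem.simps)

lemma Helem_Newton:
  "of_nat n * Helem n = (\<Sum>i = 1..n. (-1) ^ (i - 1) * Hpow i * Helem (n - i))"
proof (cases "n = 0")
  case False
  then show ?thesis
    by (subst Helem.simps) (simp add: of_nat_mult_fps_const_inverse flip: mult.assoc)
qed simp

(* H(1^(a-k)), extended by 0 to a < k instead of by truncated subtraction. *)
definition Helem_sub :: "nat \<Rightarrow> nat \<Rightarrow> qpoly fps" where
  "Helem_sub k a = (if k \<le> a then Helem (a - k) else 0)"

lemma Helem_sub_Newton:
  assumes "j < k"
  shows "(\<Sum>i = 1..n. (-1) ^ (i - 1) * Hpow i * Helem_sub k (n - i + j)) =
    of_nat (n + j - k) * Helem_sub k (n + j)"
proof (cases "k \<le> n + j")
  case True
  define m where "m = n + j - k"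
  have "(\<Sum>i = 1..n. (-1) ^ (i - 1) * Hpow i * Helem_sub k (n - i + j)) =
      (\<Sum>i = 1..m. (-1) ^ (i - 1) * Hpow i * Helem (m - i))"
    using assms True
    by (intro sum.mono_neutral_cong_right) (auto simp: Helem_sub_def m_def ac_simps)
  also have "\<dots> = of_nat m * Helem m"
    by (simp add: Helem_Newton)
  finally show ?thesis
    using True by (simp add: Helem_sub_def m_def)
qed (auto simp: Helem_sub_def intro!: sum.neutral)

lemma sum_delta_Hpow_mult_Helem:
  assumes "odd k" "3 \<le> k"
  shows "(\<Sum>i = 1..n. (-1) ^ (i - 1) * delta k (Hpow i) * Helem (n - i)) =
    - (\<Sum>j = 1..k - 1. of_nat ((k - 1) choose j) * (fps_X ^ j * Helem_sub k (n + j)))"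
proof -
  let ?T = "\<lambda>i. of_nat ((k - 1) choose (i - 1)) * (fps_X ^ (k - i) * Helem (n - i))"
  have choose_symmetric: "(k - 1) choose (k - i) = (k - 1) choose (i - 1)" if "1 \<le> i" "i < k" for i
    using that binomial_symmetric[of "i - 1" "k - 1"] by simp
  have sign: "(-1) ^ (i - 1) * (-1) ^ i = (-1 :: qpoly fps)" if "1 \<le> i" for i
    using that by (cases i) auto
  have "(\<Sum>i = 1..n. (-1) ^ (i - 1) * delta k (Hpow i) * Helem (n - i)) =
      (\<Sum>i = 1..n. - (if i < k then ?T i else 0))"
    using assms by (intro sum.cong) (auto simp: delta_Hpow mult.assoc[symmetric] sign[simplified])
  also have "\<dots> = - (\<Sum>i = 1..min n (k - 1). ?T i)"
    by (simp add: sum_negf, intro sum.mono_neutral_cong_right) auto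
  also have "(\<Sum>i = 1..min n (k - 1). ?T i) =
      (\<Sum>i = 1..k - 1. of_nat ((k - 1) choose (k - i)) * (fps_X ^ (k - i) * Helem_sub k (n + (k - i))))"
    by (intro sum.mono_neutral_cong_left) (auto simp: Helem_sub_def choose_symmetric[simplified])
  also have "\<dots> = (\<Sum>j = 1..k - 1. of_nat ((k - 1) choose j) * (fps_X ^ j * Helem_sub k (n + j)))"
    by (rule sum.reindex_bij_witness[of _ "\<lambda>j. k - j" "\<lambda>j. k - j"]) auto
  finally show ?thesis .
qed

lemma sum_Hpow_mult_delta_Helem:
  assumes "\<And>m. m < n \<Longrightarrow>
    delta k (Helem m) = - (\<Sum>j = 1..k - 1. c j * (fps_X ^ j * Helem_sub k (m + j)))"
  shows "(\<Sum>i = 1..n. (-1) ^ (i - 1) * Hpow i * delta k (Helem (n - i))) =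
    - (\<Sum>j = 1..k - 1. c j * (of_nat (n + j - k) * (fps_X ^ j * Helem_sub k (n + j))))"
proof -
  have "(\<Sum>i = 1..n. (-1) ^ (i - 1) * Hpow i * delta k (Helem (n - i))) =
      (\<Sum>i = 1..n. - (\<Sum>j = 1..k - 1. c j * fps_X ^ j *
          ((-1) ^ (i - 1) * Hpow i * Helem_sub k (n - i + j))))"
    by (intro sum.cong refl) (simp add: assms sum_distrib_left ac_simps)
  also have "\<dots> = - (\<Sum>j = 1..k - 1. c j * fps_X ^ j *
      (\<Sum>i = 1..n. (-1) ^ (i - 1) * Hpow i * Helem_sub k (n - i + j)))"
    by (simp only: sum_negf sum_distrib_left neg_equal_iff_equal) (rule sum.swap)
  also have "\<dots> = - (\<Sum>j = 1..k - 1. c j * fps_X ^ j * (of_nat (n + j - k) * Helem_sub k (n + j)))"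
  proof (intro arg_cong[where f = uminus] sum.cong refl)
    fix j assume "j \<in> {1..k - 1}"
    then have "j < k" by auto
    then show "c j * fps_X ^ j * (\<Sum>i = 1..n. (-1) ^ (i - 1) * Hpow i * Helem_sub k (n - i + j)) =
        c j * fps_X ^ j * (of_nat (n + j - k) * Helem_sub k (n + j))"
      by (simp only: Helem_sub_Newton)
  qed
  also have "\<dots> = - (\<Sum>j = 1..k - 1. c j * (of_nat (n + j - k) * (fps_X ^ j * Helem_sub k (n + j))))"
    by (simp only: ac_simps)
  finally show ?thesis .
qed

lemma delta_Helem_Newton:
  "of_nat n * delta k (Helem n) =
    (\<Sum>i = 1..n. (-1) ^ (i - 1) * delta k (Hpow i) * Helem (n - i)) +
    (\<Sum>i = 1..n. (-1) ^ (i - 1) * Hpow i * delta k (Helem (n - i)))"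
proof -
  have "of_nat n * delta k (Helem n) = delta k (of_nat n * Helem n)"
    by (simp add: delta_mult)
  also have "\<dots> = delta k (\<Sum>i = 1..n. (-1) ^ (i - 1) * Hpow i * Helem (n - i))"
    by (simp only: Helem_Newton)
  finally show ?thesis
    by (simp add: delta_sum delta_mult sum.distrib algebra_simps)
qed

lemma mult_left_cancel_right_inverse:
  fixes a :: "'a::comm_monoid_mult"
  assumes "a * r = 1" "a * x = a * y"
  shows "x = y"
proof -
  have "x = r * (a * x)"
    using assms(1) by (simp add: mult.assoc[symmetric] mult.commute[of r])
  also have "\<dots> = y"
    using assms by (simp add: mult.assoc[symmetric] mult.commute[of r])
  finally show ?thesis .
qed

lemma binomial_combination:
  fixes q x :: "'a::comm_ring_1"
  assumes "of_nat k * q = 1" "j < k" "n + j < k \<Longrightarrow> x = 0"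
  shows "of_nat ((k - 1) choose j) * x + q * of_nat (k choose j) * (of_nat (n + j - k) * x) =
    of_nat n * (q * of_nat (k choose j) * x)"
proof (cases "k \<le> n + j")
  case True
  have "of_nat ((k - 1) choose j) = q * (of_nat k * of_nat ((k - 1) choose j))"
    using assms(1) by (simp add: mult.assoc[symmetric] mult.commute[of q])
  also have "\<dots> = q * (of_nat (k - j) * of_nat (k choose j))"
    by (metis binomial_absorb_comp of_nat_mult)
  finally have absorb: "of_nat ((k - 1) choose j) = q * (of_nat (k - j) * of_nat (k choose j))" .
  have "n = (k - j) + (n + j - k)"
    using assms(2) True by simp
  then have "of_nat n = of_nat (k - j) + (of_nat (n + j - k) :: 'a)"
    by (metis of_nat_add)
  with absorb show ?thesis
    by (simp add: algebra_simps)
qed (simp add: assms(3))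

lemma delta_Helem_eq_sum_Helem_sub:
  assumes "odd k" "3 \<le> k"
  shows "delta k (Helem n) = - (\<Sum>j = 1..k - 1.
    fps_const (qconst (1 / of_nat k)) * of_nat (k choose j) * (fps_X ^ j * Helem_sub k (n + j)))"
proof (induction n rule: less_induct)
  case (less n)
  let ?q = "fps_const (qconst (1 / of_nat k))"
  have q: "of_nat k * ?q = 1"
    using assms by (simp add: of_nat_mult_fps_const_inverse)
  show ?case
  proof (cases "n = 0")
    case True
    then show ?thesis
      by (auto simp: Helem_sub_def intro!: sum.neutral)
  next
    case False
    have "of_nat n * delta k (Helem n) = - (\<Sum>j = 1..k - 1.
        of_nat ((k - 1) choose j) * (fps_X ^ j * Helem_sub k (n + j)) +
        ?q * of_nat (k choose j) * (of_nat (n + j - k) * (fps_X ^ j * Helem_sub k (n + j))))"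
      by (simp only: delta_Helem_Newton sum_delta_Hpow_mult_Helem[OF assms]
          sum_Hpow_mult_delta_Helem[OF less.IH] minus_add_distrib sum.distrib)
    also have "\<dots> = of_nat n * - (\<Sum>j = 1..k - 1.
        ?q * of_nat (k choose j) * (fps_X ^ j * Helem_sub k (n + j)))"
      unfolding mult_minus_right sum_distrib_left
      by (intro arg_cong[where f = uminus] sum.cong refl binomial_combination[OF q])
        (auto simp: Helem_sub_def)
    finally show ?thesis
      by (rule mult_left_cancel_right_inverse[OF of_nat_mult_fps_const_inverse[OF False]])
  qed
qed

theorem mainTheorem6:
  fixes n k :: nat
  assumes "odd k" and "k \<ge> 3"
  shows "delta k (Helem n) =
    - (\<Sum>i = max 1 (k - n)..k - 1.
         fps_const (qconst (1 / of_nat k) * of_nat (k choose i)) * fps_X ^ i * Helem (n + i - k))"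
proof -
  have coeff: "fps_const (qconst (1 / of_nat k) * of_nat (k choose i)) =
      fps_const (qconst (1 / of_nat k)) * of_nat (k choose i)" for i
    by (simp only: fps_const_mult[symmetric] fps_of_nat)
  have "(\<Sum>j = 1..k - 1.
        fps_const (qconst (1 / of_nat k)) * of_nat (k choose j) * (fps_X ^ j * Helem_sub k (n + j))) =
      (\<Sum>i = max 1 (k - n)..k - 1.
        fps_const (qconst (1 / of_nat k) * of_nat (k choose i)) * fps_X ^ i * Helem (n + i - k))"
    unfolding coeff mult.assoc
    by (intro sum.mono_neutral_cong_right) (auto simp: Helem_sub_def)
  with delta_Helem_eq_sum_Helem_sub[OF assms] show ?thesis
    by simp
qed

end
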